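(* Let $p$ be a prime. Suppose that every finite metabelian semi-$p$-abelian $p$-group is semi-$p^{2}$-abelian. Then every finite metabelian semi-$p$-abelian $p$-group is strongly semi-$p$-abelian.
   Context: Let $G$ be a finite $p$-group. For a positive integer $i$, $G$ is called semi-$p^{i}$-abelian if for all $a,b\in G$: $(ab)^{p^{i}}=1$ if and only if $a^{p^{i}}b^{p^{i}}=1$. $G$ is strongly semi-$p$-abelian if it is semi-$p^{i}$-abelian for every positive integer $i$. Metabelian means $G''=1$. *)

theory Defs
  imports "HOL-Algebra.Algebra"
begin

definition finite_p_group :: "('a, 'b) monoid_scheme \<Rightarrow> nat \<Rightarrow> bool" where
  "finite_p_group G p \<longleftrightarrow> group G \<and> finite (carrier G) \<and> (\<exists>n::nat. order G = p ^ n)"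

definition metabelian :: "('a, 'b) monoid_scheme \<Rightarrow> bool" where
  "metabelian G \<longleftrightarrow> derived G (derived G (carrier G)) = {\<one>\<^bsub>G\<^esub>}"

definition semi_pi_abelian :: "('a, 'b) monoid_scheme \<Rightarrow> nat \<Rightarrow> nat \<Rightarrow> bool" where
  "semi_pi_abelian G p i \<longleftrightarrow>
     (\<forall>a \<in> carrier G. \<forall>b \<in> carrier G.
        (a \<otimes>\<^bsub>G\<^esub> b) [^]\<^bsub>G\<^esub> (p ^ i) = \<one>\<^bsub>G\<^esub> \<longleftrightarrow>
        a [^]\<^bsub>G\<^esub> (p ^ i) \<otimes>\<^bsub>G\<^esub> b [^]\<^bsub>G\<^esub> (p ^ i) = \<one>\<^bsub>G\<^esub>)"

definition strongly_semi_p_abelian :: "('a, 'b) monoid_scheme \<Rightarrow> nat \<Rightarrow> bool" where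
  "strongly_semi_p_abelian G p \<longleftrightarrow> (\<forall>i::nat. i \<ge> 1 \<longrightarrow> semi_pi_abelian G p i)"

end

theory Submission
  imports Defs
begin

text \<open>In a semi-\<open>p\<close>-abelian group \<open>G\<close> the elements \<open>x\<close> with \<open>x^p = 1\<close> form a normal
  subgroup \<open>\<Omega>\<^sub>1(G)\<close>, so \<open>x^p = 1\<close> exactly when \<open>x\<close> lies in the kernel of
  \<open>G \<rightarrow> G/\<Omega>\<^sub>1(G)\<close>. Applied to \<open>x = (ab)^(p^k)\<close> and, using semi-\<open>p\<close>-abelianity once more,
  to \<open>x = a^(p^k) b^(p^k)\<close>, this shows that \<open>G\<close> is semi-\<open>p^(k+1)\<close>-abelian iff \<open>G/\<Omega>\<^sub>1(G)\<close>
  is semi-\<open>p^k\<close>-abelian. The quotient is again a finite metabelian \<open>p\<close>-group, and the case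
  \<open>k = 1\<close> together with the hypothesis makes it semi-\<open>p\<close>-abelian, so induction on \<open>k\<close>
  applies. The hypothesis only concerns groups on \<^typ>\<open>nat\<close>, so each quotient is first
  replaced by an isomorphic copy on \<^typ>\<open>nat\<close>.\<close>

definition Omega1 :: "('a, 'b) monoid_scheme \<Rightarrow> nat \<Rightarrow> 'a set" where
  "Omega1 G p = {x \<in> carrier G. x [^]\<^bsub>G\<^esub> p = \<one>\<^bsub>G\<^esub>}"

lemma (in group) nat_pow_conj:
  assumes x: "x \<in> carrier G" and h: "h \<in> carrier G"
  shows "(x \<otimes> h \<otimes> inv x) [^] (n::nat) = x \<otimes> h [^] n \<otimes> inv x"
proof (induction n)
  case 0 then show ?case using assms by simp
next
  case (Suc n)
  have cancel: "inv x \<otimes> (x \<otimes> y) = y" if "y \<in> carrier G" for y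
    using x that by (simp add: m_assoc[symmetric])
  have "(x \<otimes> h \<otimes> inv x) [^] Suc n = x \<otimes> (h [^] n \<otimes> (inv x \<otimes> (x \<otimes> (h \<otimes> inv x))))"
    using Suc assms by (simp add: m_assoc)
  also have "\<dots> = x \<otimes> h [^] Suc n \<otimes> inv x"
    using assms by (simp add: cancel m_assoc)
  finally show ?case .
qed

lemma (in group) Omega1_normal:
  assumes "semi_pi_abelian G p 1"
  shows "Omega1 G p \<lhd> G"
  unfolding normal_inv_iff
proof (intro conjI ballI)
  show "subgroup (Omega1 G p) G"
    using assms by (intro subgroupI) (auto simp: Omega1_def semi_pi_abelian_def nat_pow_inv)
  show "x \<otimes> h \<otimes> inv x \<in> Omega1 G p" if "x \<in> carrier G" "h \<in> Omega1 G p" for x h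
    using that by (simp add: Omega1_def nat_pow_conj)
qed

lemma (in group_hom) semi_pi_abelian_Suc_iff_image:
  assumes surj: "h ` carrier G = carrier H"
    and ker: "\<And>x. x \<in> carrier G \<Longrightarrow> h x = \<one>\<^bsub>H\<^esub> \<longleftrightarrow> x [^] p = \<one>"
    and semi: "semi_pi_abelian G p 1"
  shows "semi_pi_abelian G p (Suc k) \<longleftrightarrow> semi_pi_abelian H p k"
proof -
  have pow_Suc: "x [^] (p ^ Suc k) = (x [^] (p ^ k)) [^] p" if "x \<in> carrier G" for x
    using that by (simp add: G.nat_pow_pow mult.commute)
  have prod: "(a \<otimes> b) [^] (p ^ Suc k) = \<one> \<longleftrightarrow> (h a \<otimes>\<^bsub>H\<^esub> h b) [^]\<^bsub>H\<^esub> (p ^ k) = \<one>\<^bsub>H\<^esub>"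
    if a: "a \<in> carrier G" and b: "b \<in> carrier G" for a b
  proof -
    have "(a \<otimes> b) [^] (p ^ Suc k) = \<one> \<longleftrightarrow> h ((a \<otimes> b) [^] (p ^ k)) = \<one>\<^bsub>H\<^esub>"
      using a b by (simp only: pow_Suc ker G.m_closed G.nat_pow_closed)
    then show ?thesis
      using a b by (simp add: hom_nat_pow)
  qed
  have powers: "a [^] (p ^ Suc k) \<otimes> b [^] (p ^ Suc k) = \<one> \<longleftrightarrow>
      h a [^]\<^bsub>H\<^esub> (p ^ k) \<otimes>\<^bsub>H\<^esub> h b [^]\<^bsub>H\<^esub> (p ^ k) = \<one>\<^bsub>H\<^esub>"
    if a: "a \<in> carrier G" and b: "b \<in> carrier G" for a b
  proof -
    have "a [^] (p ^ Suc k) \<otimes> b [^] (p ^ Suc k) = \<one> \<longleftrightarrow>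
        (a [^] (p ^ k) \<otimes> b [^] (p ^ k)) [^] p = \<one>"
      using semi a b by (simp only: pow_Suc semi_pi_abelian_def power_one_right G.nat_pow_closed)
    also have "\<dots> \<longleftrightarrow> h (a [^] (p ^ k) \<otimes> b [^] (p ^ k)) = \<one>\<^bsub>H\<^esub>"
      using a b by (simp only: ker G.m_closed G.nat_pow_closed)
    finally show ?thesis
      using a b by (simp add: hom_nat_pow)
  qed
  have "semi_pi_abelian G p (Suc k) \<longleftrightarrow> (\<forall>a \<in> carrier G. \<forall>b \<in> carrier G.
      (h a \<otimes>\<^bsub>H\<^esub> h b) [^]\<^bsub>H\<^esub> (p ^ k) = \<one>\<^bsub>H\<^esub> \<longleftrightarrow>
      h a [^]\<^bsub>H\<^esub> (p ^ k) \<otimes>\<^bsub>H\<^esub> h b [^]\<^bsub>H\<^esub> (p ^ k) = \<one>\<^bsub>H\<^esub>)"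
    unfolding semi_pi_abelian_def by (simp only: prod powers cong: ball_cong)
  also have "\<dots> \<longleftrightarrow> semi_pi_abelian H p k"
    unfolding semi_pi_abelian_def surj[symmetric] by blast
  finally show ?thesis .
qed

lemma (in group) semi_pi_abelian_Suc_iff_Mod_Omega1:
  assumes semi: "semi_pi_abelian G p 1"
  shows "semi_pi_abelian G p (Suc k) \<longleftrightarrow> semi_pi_abelian (G Mod Omega1 G p) p k"
proof -
  interpret N: normal "Omega1 G p" G using Omega1_normal[OF semi] .
  have ker: "Omega1 G p #> x = Omega1 G p \<longleftrightarrow> x [^] p = \<one>" if "x \<in> carrier G" for x
  proof -
    have "Omega1 G p #> x = Omega1 G p \<longleftrightarrow> x \<in> Omega1 G p"
      using coset_join1[OF _ that N.is_subgroup] coset_join2[OF that N.is_subgroup] by (rule iffI)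
    moreover have "x \<in> Omega1 G p \<longleftrightarrow> x [^] p = \<one>"
      using that unfolding Omega1_def by blast
    ultimately show ?thesis by blast
  qed
  interpret group_hom G "G Mod Omega1 G p" "\<lambda>a. Omega1 G p #> a"
    using N.r_coset_hom_Mod N.factorgroup_is_group by (simp add: group_hom_def group_hom_axioms_def)
  show ?thesis
  proof (rule semi_pi_abelian_Suc_iff_image[OF _ _ semi])
    show "(\<lambda>a. Omega1 G p #> a) ` carrier G = carrier (G Mod Omega1 G p)"
      by (simp add: carrier_FactGroup)
    show "Omega1 G p #> x = \<one>\<^bsub>G Mod Omega1 G p\<^esub> \<longleftrightarrow> x [^] p = \<one>" if "x \<in> carrier G" for x
      using ker[OF that] by simp
  qed
qed

lemma (in group_hom) metabelian_image:
  assumes "h ` carrier G = carrier H" and "metabelian G"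
  shows "metabelian H"
proof -
  have "(derived H ^^ 2) (h ` carrier G) = h ` ((derived G ^^ 2) (carrier G))"
    by (rule exp_of_derived_img) simp
  with assms show ?thesis
    by (simp add: metabelian_def numeral_2_eq_2)
qed

lemma (in normal) metabelian_Mod:
  assumes "metabelian G"
  shows "metabelian (G Mod H)"
proof -
  interpret group_hom G "G Mod H" "\<lambda>a. H #> a"
    using r_coset_hom_Mod factorgroup_is_group by (simp add: group_hom_def group_hom_axioms_def)
  show ?thesis
    using assms by (intro metabelian_image) (simp_all add: carrier_FactGroup)
qed

lemma metabelian_iso:
  assumes "group G" "group H" "G \<cong> H" "metabelian G"
  shows "metabelian H"
proof -
  obtain h where h: "h \<in> iso G H" using assms(3) by (auto simp: is_iso_def)
  then interpret group_hom G H h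
    using assms by (simp add: group_hom_def group_hom_axioms_def iso_imp_homomorphism)
  show ?thesis using h assms(4) by (intro metabelian_image) (auto simp: iso_iff)
qed

lemma (in group) semi_pi_abelian_iso:
  assumes "group H" "G \<cong> H" and semi: "semi_pi_abelian G p i"
  shows "semi_pi_abelian H p i"
proof -
  obtain h where h: "h \<in> iso G H" using assms(2) by (auto simp: is_iso_def)
  then interpret group_hom G H h
    using assms is_group by (simp add: group_hom_def group_hom_axioms_def iso_imp_homomorphism)
  have surj: "h ` carrier G = carrier H" and inj: "inj_on h (carrier G)"
    using h by (auto simp: iso_def bij_betw_def)
  have one: "h x = \<one>\<^bsub>H\<^esub> \<longleftrightarrow> x = \<one>" if "x \<in> carrier G" for x
    using inj_on_eq_iff[OF inj that, of "\<one>\<^bsub>G\<^esub>"] by simp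
  have "(h a \<otimes>\<^bsub>H\<^esub> h b) [^]\<^bsub>H\<^esub> (p ^ i) = \<one>\<^bsub>H\<^esub> \<longleftrightarrow>
      h a [^]\<^bsub>H\<^esub> (p ^ i) \<otimes>\<^bsub>H\<^esub> h b [^]\<^bsub>H\<^esub> (p ^ i) = \<one>\<^bsub>H\<^esub>"
    if a: "a \<in> carrier G" and b: "b \<in> carrier G" for a b
  proof -
    have "(h a \<otimes>\<^bsub>H\<^esub> h b) [^]\<^bsub>H\<^esub> (p ^ i) = h ((a \<otimes> b) [^] (p ^ i))"
      and "h a [^]\<^bsub>H\<^esub> (p ^ i) \<otimes>\<^bsub>H\<^esub> h b [^]\<^bsub>H\<^esub> (p ^ i) = h (a [^] (p ^ i) \<otimes> b [^] (p ^ i))"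
      using a b by (simp_all add: hom_nat_pow)
    then show ?thesis
      using semi a b by (simp add: one semi_pi_abelian_def del: hom_mult)
  qed
  then show ?thesis
    unfolding semi_pi_abelian_def surj[symmetric] by blast
qed

lemma finite_p_group_iso:
  assumes "finite_p_group G p" "G \<cong> H" "group H"
  shows "finite_p_group H p"
  using assms iso_same_card[OF assms(2)] iso_finite[OF assms(2)]
  by (simp add: finite_p_group_def order_def)

lemma (in normal) finite_p_group_Mod:
  assumes p: "Factorial_Ring.prime p" and "finite_p_group G p"
  shows "finite_p_group (G Mod H) p"
proof -
  obtain n where n: "order G = p ^ n" and fin: "finite (carrier G)"
    using assms(2) by (auto simp: finite_p_group_def)
  have "order (G Mod H) * card H = p ^ n"
    using n by (simp add: FactGroup_def lagrange order_def subgroup_axioms)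
  then obtain i where "order (G Mod H) = p ^ i"
    using divides_primepow_nat[OF p] by (metis dvd_triv_left)
  moreover have "finite (carrier (G Mod H))"
    using fin by (simp add: carrier_FactGroup)
  ultimately show ?thesis
    using factorgroup_is_group by (auto simp: finite_p_group_def)
qed

lemma finite_metabelian_semi_p_abelian_iso:
  assumes "group G" "group H" "G \<cong> H"
    and "finite_p_group G p" "metabelian G" "semi_pi_abelian G p 1"
  shows "finite_p_group H p \<and> metabelian H \<and> semi_pi_abelian H p 1"
  using assms finite_p_group_iso metabelian_iso group.semi_pi_abelian_iso by blast

definition nat_copy :: "('a, 'b) monoid_scheme \<Rightarrow> ('a \<Rightarrow> nat) \<Rightarrow> nat monoid" where
  "nat_copy G r = \<lparr>carrier = r ` carrier G,
      monoid.mult = (\<lambda>x y. r (the_inv_into (carrier G) r x \<otimes>\<^bsub>G\<^esub> the_inv_into (carrier G) r y)),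
      one = r \<one>\<^bsub>G\<^esub>\<rparr>"

lemma nat_copy_iso:
  assumes "group G" "inj_on r (carrier G)"
  shows "r \<in> iso G (nat_copy G r)"
  using assms by (force simp: iso_def hom_def bij_betw_def nat_copy_def the_inv_into_f_f)

lemma countable_group_iso_nat_monoid:
  assumes G: "group G" and "countable (carrier G)"
  obtains H :: "nat monoid" where "group H" "G \<cong> H"
proof -
  obtain r :: "'a \<Rightarrow> nat" where r: "inj_on r (carrier G)"
    using assms(2) by (auto simp: countable_def)
  have iso: "r \<in> iso G (nat_copy G r)" by (rule nat_copy_iso[OF G r])
  have "monoid (nat_copy G r)"
    using monoid.hom_imp_img_monoid[OF group.is_monoid[OF G] iso_imp_homomorphism[OF iso]]
    by (simp add: nat_copy_def)
  then have "group (nat_copy G r)"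
    using group.iso_imp_group[OF G is_isoI[OF iso]] by blast
  then show ?thesis using that is_isoI[OF iso] by blast
qed

lemma semi_pi_abelian_Suc_nat:
  fixes p k :: nat and H :: "nat monoid"
  assumes p: "Factorial_Ring.prime p"
    and hyp: "\<And>H :: nat monoid. finite_p_group H p \<Longrightarrow> metabelian H \<Longrightarrow>
                 semi_pi_abelian H p 1 \<Longrightarrow> semi_pi_abelian H p 2"
    and "finite_p_group H p" "metabelian H" "semi_pi_abelian H p 1"
  shows "semi_pi_abelian H p (Suc k)"
  using assms(3-)
proof (induction k arbitrary: H)
  case 0 then show ?case by simp
next
  case (Suc k)
  interpret H: group H using Suc.prems(1) by (simp add: finite_p_group_def)
  interpret N: normal "Omega1 H p" H using H.Omega1_normal[OF Suc.prems(3)] .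
  let ?Q = "H Mod Omega1 H p"
  have Q: "group ?Q" "finite_p_group ?Q p" "metabelian ?Q" "semi_pi_abelian ?Q p 1"
    using N.factorgroup_is_group N.finite_p_group_Mod[OF p Suc.prems(1)]
      N.metabelian_Mod[OF Suc.prems(2)] hyp[OF Suc.prems]
      H.semi_pi_abelian_Suc_iff_Mod_Omega1[OF Suc.prems(3), of 1]
    by (simp_all add: numeral_2_eq_2)
  have "countable (carrier ?Q)"
    using Q(2) by (simp add: finite_p_group_def countable_finite)
  then obtain K :: "nat monoid" where K: "group K" "?Q \<cong> K"
    by (rule countable_group_iso_nat_monoid[OF Q(1)])
  have "semi_pi_abelian K p (Suc k)"
    using Suc.IH finite_metabelian_semi_p_abelian_iso[OF Q(1) K Q(2-4)] by blast
  then have "semi_pi_abelian ?Q p (Suc k)"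
    using group.semi_pi_abelian_iso[OF K(1) Q(1) group.iso_sym[OF Q(1) K(2)]] by blast
  then show ?case
    using H.semi_pi_abelian_Suc_iff_Mod_Omega1[OF Suc.prems(3)] by blast
qed

theorem lemma2p3:
  fixes p :: nat and G :: "('a, 'b) monoid_scheme"
  assumes "Factorial_Ring.prime p"
    and hyp: "\<And>H :: nat monoid. finite_p_group H p \<Longrightarrow> metabelian H \<Longrightarrow>
                 semi_pi_abelian H p 1 \<Longrightarrow> semi_pi_abelian H p 2"
    and "finite_p_group G p" and "metabelian G" and "semi_pi_abelian G p 1"
  shows "strongly_semi_p_abelian G p"
proof -
  have G: "group G" and "countable (carrier G)"
    using assms(3) by (auto simp: finite_p_group_def countable_finite)
  then obtain H :: "nat monoid" where H: "group H" "G \<cong> H"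
    by (rule countable_group_iso_nat_monoid)
  have "semi_pi_abelian H p (Suc k)" for k
    using semi_pi_abelian_Suc_nat[OF assms(1) hyp]
      finite_metabelian_semi_p_abelian_iso[OF G H assms(3-5)] by blast
  then have "semi_pi_abelian G p i" if "i \<ge> 1" for i
    using group.semi_pi_abelian_iso[OF H(1) G group.iso_sym[OF G H(2)]] that by (cases i) auto
  then show ?thesis
    unfolding strongly_semi_p_abelian_def by blast
qed

end
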